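(* Let $n\ge2$ and let $g_1,\dots,g_r\in\mathbb R[X_1,\dots,X_n]$ satisfy $1-\|\mathbf X\|_2^2\in\mathcal Q(\mathbf g)$ and $\|g_i\|\le\tfrac12$ for all $i$. Let $\mathfrak c\ge1,\textit{Ł}\ge1$ satisfy $D(x)^{\textit{Ł}}\le\mathfrak c\,G(x)$ on $[-1,1]^n$, and let $\gamma(n,\mathbf g)\ge1$ be a constant depending only on $n,\mathbf g$ such that every $h\in\mathbb R[\mathbf X]$ with $\min_S h>0$ lies in $\mathcal Q_\ell(\mathbf g)$ whenever $\ell\ge\gamma(n,\mathbf g)\,d(h)^{3.5n\textit{Ł}}\epsilon(h)^{-2.5n\textit{Ł}}$. Let $f\in\mathbb R[\mathbf X]$ with $f\ge0$ on $S$ and $f^*=\min_S f$. Then for every $0<\epsilon\le\|f\|$ we have $f-f^*+\epsilon\in\mathcal Q_\ell(\mathbf g)$ whenever $$\ell\ge\gamma'(n,\mathbf g)\,d(f)^{3.5n\textit{Ł}}\,\|f\|^{2.5n\textit{Ł}}\,\epsilon^{-2.5n\textit{Ł}},\qquad \gamma'(n,\mathbf g)=3^{2.5n\textit{Ł}}\gamma(n,\mathbf g).$$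
   Context: $\Sigma^2$ sums of squares; $S=\{x:g_i(x)\ge0\ \forall i\}$ (nonempty); $\mathcal Q(\mathbf g)=\Sigma^2+\sum_i\Sigma^2g_i$; $\mathcal Q_\ell(\mathbf g)=\{s_0+\sum_is_ig_i: s_j\in\Sigma^2,\deg s_0\le\ell,\deg(s_ig_i)\le\ell\}$; $\|h\|=\max_{[-1,1]^n}|h|$; $\|\mathbf X\|_2^2=\sum X_i^2$; $d(h)=\deg h$; $\epsilon(h)=\min_S h/\|h\|$; $G(x)=|\min\{g_1(x),\dots,g_r(x),0\}|$, $D(x)=\operatorname{dist}(x,S)$. *)

theory Defs
  imports "HOL-Analysis.Analysis" "HOL-Library.Poly_Mapping"
begin

text \<open>Real multivariate polynomials: a polynomial is a finitely supported map
from monomials (exponent vectors nat =>0 nat, variable i standing for X_(i+1))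
to real coefficients.\<close>

type_synonym mpoly = "(nat \<Rightarrow>\<^sub>0 nat) \<Rightarrow>\<^sub>0 real"

definition poly_in :: "nat \<Rightarrow> mpoly \<Rightarrow> bool" where
  "poly_in n p \<longleftrightarrow> (\<forall>m\<in>Poly_Mapping.keys p. Poly_Mapping.keys m \<subseteq> {..<n})"

definition mconst :: "real \<Rightarrow> mpoly" where
  "mconst c = Poly_Mapping.single 0 c"

definition mvar :: "nat \<Rightarrow> mpoly" where
  "mvar i = Poly_Mapping.single (Poly_Mapping.single i 1) 1"

definition meval :: "mpoly \<Rightarrow> (nat \<Rightarrow> real) \<Rightarrow> real" where
  "meval p x = (\<Sum>m\<in>Poly_Mapping.keys p. Poly_Mapping.lookup p m * (\<Prod>i\<in>Poly_Mapping.keys m. x i ^ Poly_Mapping.lookup m i))"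

definition mdeg :: "mpoly \<Rightarrow> nat" where
  "mdeg p = Max (insert 0 ((\<lambda>m. \<Sum>i\<in>Poly_Mapping.keys m. Poly_Mapping.lookup m i) ` Poly_Mapping.keys p))"

definition Rn :: "nat \<Rightarrow> (nat \<Rightarrow> real) set" where
  "Rn n = {x. \<forall>i\<ge>n. x i = 0}"

definition cube :: "nat \<Rightarrow> (nat \<Rightarrow> real) set" where
  "cube n = {x \<in> Rn n. \<forall>i<n. \<bar>x i\<bar> \<le> 1}"

definition mnorm :: "nat \<Rightarrow> mpoly \<Rightarrow> real" where
  "mnorm n h = (SUP x\<in>cube n. \<bar>meval h x\<bar>)"

definition sos :: "nat \<Rightarrow> mpoly \<Rightarrow> bool" where
  "sos n p \<longleftrightarrow> (\<exists>qs. (\<forall>q\<in>set qs. poly_in n q) \<and> p = (\<Sum>q\<leftarrow>qs. q * q))"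

definition qmod :: "nat \<Rightarrow> nat \<Rightarrow> (nat \<Rightarrow> mpoly) \<Rightarrow> mpoly set" where
  "qmod n r g = {p. \<exists>s0 s. sos n s0 \<and> (\<forall>i<r. sos n (s i)) \<and>
                       p = s0 + (\<Sum>i<r. s i * g i)}"

definition qmod_trunc :: "nat \<Rightarrow> nat \<Rightarrow> (nat \<Rightarrow> mpoly) \<Rightarrow> nat \<Rightarrow> mpoly set" where
  "qmod_trunc n r g l = {p. \<exists>s0 s. sos n s0 \<and> (\<forall>i<r. sos n (s i)) \<and>
                       mdeg s0 \<le> l \<and> (\<forall>i<r. mdeg (s i * g i) \<le> l) \<and>
                       p = s0 + (\<Sum>i<r. s i * g i)}"

definition semialg :: "nat \<Rightarrow> nat \<Rightarrow> (nat \<Rightarrow> mpoly) \<Rightarrow> (nat \<Rightarrow> real) set" where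
  "semialg n r g = {x \<in> Rn n. \<forall>i<r. meval (g i) x \<ge> 0}"

definition minS :: "nat \<Rightarrow> nat \<Rightarrow> (nat \<Rightarrow> mpoly) \<Rightarrow> mpoly \<Rightarrow> real" where
  "minS n r g h = (INF x\<in>semialg n r g. meval h x)"

definition eps_rel :: "nat \<Rightarrow> nat \<Rightarrow> (nat \<Rightarrow> mpoly) \<Rightarrow> mpoly \<Rightarrow> real" where
  "eps_rel n r g h = minS n r g h / mnorm n h"

definition Gfun :: "nat \<Rightarrow> (nat \<Rightarrow> mpoly) \<Rightarrow> (nat \<Rightarrow> real) \<Rightarrow> real" where
  "Gfun r g x = \<bar>Min (insert 0 ((\<lambda>i. meval (g i) x) ` {..<r}))\<bar>"

definition Dfun :: "nat \<Rightarrow> nat \<Rightarrow> (nat \<Rightarrow> mpoly) \<Rightarrow> (nat \<Rightarrow> real) \<Rightarrow> real" where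
  "Dfun n r g x = (INF y\<in>semialg n r g. sqrt (\<Sum>i<n. (x i - y i)^2))"

end

theory Submission
  imports Defs
begin

text \<open>Shifting f by the constant \<epsilon> - f* gives a polynomial h of the same degree with
  min_S h = \<epsilon>. Since 1 - |X|^2 \<in> Q(g) forces S \<subseteq> [-1,1]^n, we have 0 \<le> f* \<le> \<parallel>f\<parallel>, hence
  \<parallel>h\<parallel> \<le> \<parallel>f\<parallel> + f* + \<epsilon> \<le> 3 \<parallel>f\<parallel> and \<epsilon>(h) \<ge> \<epsilon> / (3 \<parallel>f\<parallel>). Feeding these bounds into the
  assumed effective Putinar Positivstellensatz for h gives the claimed degree bound.\<close>

definition monom_eval :: "(nat \<Rightarrow> real) \<Rightarrow> (nat \<Rightarrow>\<^sub>0 nat) \<Rightarrow> real" where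
  "monom_eval x m = (\<Prod>i\<in>Poly_Mapping.keys m. x i ^ Poly_Mapping.lookup m i)"

lemma monom_eval_superset:
  assumes "finite A" "Poly_Mapping.keys m \<subseteq> A"
  shows "monom_eval x m = (\<Prod>i\<in>A. x i ^ Poly_Mapping.lookup m i)"
  unfolding monom_eval_def
  by (rule prod.mono_neutral_left) (use assms in \<open>auto simp: in_keys_iff\<close>)

lemma monom_eval_add: "monom_eval x (k + m) = monom_eval x k * monom_eval x m"
proof -
  let ?A = "Poly_Mapping.keys k \<union> Poly_Mapping.keys m"
  have "monom_eval x (k + m) = (\<Prod>i\<in>?A. x i ^ Poly_Mapping.lookup (k + m) i)"
    by (rule monom_eval_superset) (auto dest: keys_add[THEN subsetD])
  also have "\<dots> = (\<Prod>i\<in>?A. x i ^ Poly_Mapping.lookup k i * x i ^ Poly_Mapping.lookup m i)"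
    by (simp add: lookup_add power_add)
  also have "\<dots> = monom_eval x k * monom_eval x m"
    by (simp add: prod.distrib monom_eval_superset[of ?A])
  finally show ?thesis .
qed

lemma abs_monom_eval_le_1:
  assumes "\<And>i. \<bar>x i\<bar> \<le> 1"
  shows "\<bar>monom_eval x m\<bar> \<le> 1"
  unfolding monom_eval_def abs_prod
  by (rule prod_le_1) (auto simp: power_abs assms intro: power_le_one)

lemma meval_eq_monom_eval:
  "meval p x = (\<Sum>m\<in>Poly_Mapping.keys p. Poly_Mapping.lookup p m * monom_eval x m)"
  by (simp add: meval_def monom_eval_def)

lemma meval_add: "meval (p + q) x = meval p x + meval q x"
  unfolding meval_eq_monom_eval
  by (rule setsum_keys_plus_distrib) (simp_all add: lookup_add distrib_right)

lemma meval_uminus: "meval (- p) x = - meval p x"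
  by (simp add: meval_eq_monom_eval lookup_uminus sum_negf)

lemma meval_diff: "meval (p - q) x = meval p x - meval q x"
  using meval_add[of p "- q" x] by (simp add: meval_uminus)

lemma meval_zero [simp]: "meval 0 x = 0"
  by (simp add: meval_def)

lemma meval_sum: "meval (\<Sum>i\<in>I. p i) x = (\<Sum>i\<in>I. meval (p i) x)"
  by (induction I rule: infinite_finite_induct) (auto simp: meval_add)

lemma meval_single: "meval (Poly_Mapping.single m a) x = a * monom_eval x m"
  by (simp add: meval_eq_monom_eval)

lemma sum_single_lookup:
  "(\<Sum>m\<in>Poly_Mapping.keys p. Poly_Mapping.single m (Poly_Mapping.lookup p m)) = p"
proof (rule poly_mapping_eqI)
  fix k
  have "Poly_Mapping.lookup (\<Sum>m\<in>Poly_Mapping.keys p. Poly_Mapping.single m (Poly_Mapping.lookup p m)) k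
      = (\<Sum>m\<in>Poly_Mapping.keys p. Poly_Mapping.lookup p m when m = k)"
    by (simp add: lookup_sum lookup_single)
  also have "\<dots> = Poly_Mapping.lookup p k"
    by (cases "k \<in> Poly_Mapping.keys p") (auto simp: when_def in_keys_iff)
  finally show "Poly_Mapping.lookup (\<Sum>m\<in>Poly_Mapping.keys p. Poly_Mapping.single m (Poly_Mapping.lookup p m)) k
      = Poly_Mapping.lookup p k" .
qed

lemma meval_mult: "meval (p * q) x = meval p x * meval q x"
proof -
  let ?P = "Poly_Mapping.keys p" and ?Q = "Poly_Mapping.keys q"
  let ?p = "\<lambda>m. Poly_Mapping.lookup p m" and ?q = "\<lambda>m. Poly_Mapping.lookup q m"
  have "p * q = (\<Sum>m\<in>?P. Poly_Mapping.single m (?p m)) * (\<Sum>m'\<in>?Q. Poly_Mapping.single m' (?q m'))"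
    by (simp add: sum_single_lookup)
  also have "\<dots> = (\<Sum>m\<in>?P. \<Sum>m'\<in>?Q. Poly_Mapping.single m (?p m) * Poly_Mapping.single m' (?q m'))"
    by (simp add: sum_distrib_left sum_distrib_right sum.swap[of _ ?Q ?P])
  finally have "meval (p * q) x = (\<Sum>m\<in>?P. \<Sum>m'\<in>?Q. (?p m * monom_eval x m) * (?q m' * monom_eval x m'))"
    by (simp add: meval_sum mult_single meval_single monom_eval_add mult_ac)
  also have "\<dots> = meval p x * meval q x"
    by (simp add: meval_eq_monom_eval sum_product)
  finally show ?thesis .
qed

lemma meval_mconst [simp]: "meval (mconst c) x = c"
  by (simp add: mconst_def meval_single monom_eval_def)

lemma meval_mvar [simp]: "meval (mvar i) x = x i"
  by (simp add: mvar_def meval_single monom_eval_def)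

lemma sos_meval_nonneg: "sos n p \<Longrightarrow> meval p x \<ge> 0"
proof -
  assume "sos n p"
  then obtain qs where "p = (\<Sum>q\<leftarrow>qs. q * q)" unfolding sos_def by blast
  moreover have "meval (\<Sum>q\<leftarrow>qs. q * q) x \<ge> 0"
    by (induction qs) (auto simp: meval_add meval_mult)
  ultimately show ?thesis by simp
qed

lemma qmod_meval_nonneg:
  assumes "p \<in> qmod n r g" "x \<in> semialg n r g"
  shows "meval p x \<ge> 0"
proof -
  obtain s0 s where s: "sos n s0" "\<forall>i<r. sos n (s i)" "p = s0 + (\<Sum>i<r. s i * g i)"
    using assms(1) unfolding qmod_def by blast
  have "meval (s i * g i) x \<ge> 0" if "i < r" for i
    using s(2) assms(2) that sos_meval_nonneg by (auto simp: meval_mult semialg_def)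
  then show ?thesis
    using s(3) sos_meval_nonneg[OF s(1)]
    by (auto simp: meval_add meval_sum intro!: add_nonneg_nonneg sum_nonneg)
qed

lemma semialg_subset_cube:
  assumes "mconst 1 - (\<Sum>i<n. mvar i * mvar i) \<in> qmod n r g"
  shows "semialg n r g \<subseteq> cube n"
proof
  fix x assume x: "x \<in> semialg n r g"
  have "(\<Sum>i<n. x i * x i) \<le> 1"
    using qmod_meval_nonneg[OF assms x] by (simp add: meval_diff meval_sum meval_mult)
  moreover have "x i * x i \<le> (\<Sum>i<n. x i * x i)" if "i < n" for i
    by (rule member_le_sum) (use that in auto)
  ultimately have "x i * x i \<le> 1 * 1" if "i < n" for i
    using that by fastforce
  then have "\<bar>x i\<bar> \<le> 1" if "i < n" for i
    using that abs_le_square_iff[of "x i" 1] by (simp add: power2_eq_square)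
  then show "x \<in> cube n" using x by (auto simp: cube_def semialg_def)
qed

lemma abs_meval_le_coeff_sum:
  assumes "x \<in> cube n"
  shows "\<bar>meval p x\<bar> \<le> (\<Sum>m\<in>Poly_Mapping.keys p. \<bar>Poly_Mapping.lookup p m\<bar>)"
proof -
  have "\<bar>x i\<bar> \<le> 1" for i
    using assms by (cases "i < n") (auto simp: cube_def Rn_def)
  then have "\<bar>Poly_Mapping.lookup p m * monom_eval x m\<bar> \<le> \<bar>Poly_Mapping.lookup p m\<bar>" for m
    by (simp add: abs_mult mult_left_le abs_monom_eval_le_1)
  then show ?thesis
    unfolding meval_eq_monom_eval by (intro order_trans[OF sum_abs] sum_mono)
qed

lemma abs_meval_le_mnorm: "x \<in> cube n \<Longrightarrow> \<bar>meval p x\<bar> \<le> mnorm n p"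
  unfolding mnorm_def by (rule cSUP_upper) (auto intro!: bdd_aboveI2 abs_meval_le_coeff_sum)

lemma mnorm_le:
  assumes "\<And>x. x \<in> cube n \<Longrightarrow> \<bar>meval p x\<bar> \<le> B"
  shows "mnorm n p \<le> B"
proof -
  have "(\<lambda>_. 0) \<in> cube n" by (simp add: cube_def Rn_def)
  then show ?thesis unfolding mnorm_def using assms by (intro cSUP_least) auto
qed

lemma mnorm_add_mconst_le: "mnorm n (p + mconst c) \<le> mnorm n p + \<bar>c\<bar>"
proof (rule mnorm_le)
  fix x assume "x \<in> cube n"
  then show "\<bar>meval (p + mconst c) x\<bar> \<le> mnorm n p + \<bar>c\<bar>"
    using abs_meval_le_mnorm[of x n p] by (simp add: meval_add abs_triangle_ineq order_trans)
qed

lemma keys_add_mconst: "Poly_Mapping.keys (p + mconst c) \<subseteq> insert 0 (Poly_Mapping.keys p)"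
  using keys_add[of p "mconst c"] by (auto simp: mconst_def split: if_splits)

lemma mdeg_add_mconst_le: "mdeg (p + mconst c) \<le> mdeg p"
  unfolding mdeg_def using keys_add_mconst[of p c]
  by (intro Max.boundedI) (auto intro: Max_ge)

lemma poly_in_add_mconst: "poly_in n p \<Longrightarrow> poly_in n (p + mconst c)"
  unfolding poly_in_def using keys_add_mconst[of p c] by fastforce

lemma bdd_below_meval_semialg:
  assumes "semialg n r g \<subseteq> cube n"
  shows "bdd_below ((\<lambda>x. meval p x) ` semialg n r g)"
  using assms abs_meval_le_mnorm[of _ n p] by (intro bdd_belowI2[where m = "- mnorm n p"]) force

lemma minS_le_meval:
  "semialg n r g \<subseteq> cube n \<Longrightarrow> x \<in> semialg n r g \<Longrightarrow> minS n r g p \<le> meval p x"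
  unfolding minS_def by (rule cINF_lower[OF bdd_below_meval_semialg])

lemma minS_add_mconst:
  assumes "semialg n r g \<subseteq> cube n" "semialg n r g \<noteq> {}"
  shows "minS n r g (p + mconst c) = minS n r g p + c"
proof -
  let ?S = "semialg n r g"
  have "(INF x\<in>?S. meval p x + c) - c \<le> (INF x\<in>?S. meval p x)"
    using assms minS_le_meval[OF assms(1), of _ "p + mconst c"]
    by (intro cINF_greatest) (auto simp: minS_def meval_add diff_le_eq)
  moreover have "(INF x\<in>?S. meval p x) + c \<le> (INF x\<in>?S. meval p x + c)"
    using assms minS_le_meval[OF assms(1), of _ p]
    by (intro cINF_greatest) (auto simp: minS_def)
  ultimately show ?thesis by (simp add: minS_def meval_add)
qed

lemma minS_nonneg:
  assumes "semialg n r g \<noteq> {}" "\<forall>x\<in>semialg n r g. meval p x \<ge> 0"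
  shows "minS n r g p \<ge> 0"
  unfolding minS_def using assms by (intro cINF_greatest) auto

lemma minS_le_mnorm:
  assumes "semialg n r g \<subseteq> cube n" "semialg n r g \<noteq> {}"
  shows "minS n r g p \<le> mnorm n p"
proof -
  obtain x where x: "x \<in> semialg n r g" using assms(2) by blast
  have "minS n r g p \<le> meval p x" using minS_le_meval[OF assms(1) x] .
  also have "\<dots> \<le> mnorm n p" using abs_meval_le_mnorm[of x n p] x assms(1) by auto
  finally show ?thesis .
qed

lemma eps_rel_ge:
  assumes "semialg n r g \<subseteq> cube n" "semialg n r g \<noteq> {}"
    and "0 < m" "m \<le> minS n r g p" "mnorm n p \<le> N"
  shows "m / N \<le> eps_rel n r g p"
proof -
  have "0 < mnorm n p"
    using assms minS_le_mnorm[OF assms(1,2), of p] by linarith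
  then have "m / N \<le> m / mnorm n p"
    using assms(3,5) by (intro divide_left_mono) auto
  also have "\<dots> \<le> minS n r g p / mnorm n p"
    using \<open>0 < mnorm n p\<close> assms(4) by (intro divide_right_mono) auto
  finally show ?thesis by (simp add: eps_rel_def)
qed

lemma degree_threshold_le:
  fixes \<gamma> a b d d' \<eta> e F :: real
  assumes "0 \<le> \<gamma>" "0 \<le> a" "0 \<le> b" "0 \<le> d" "d \<le> d'" "0 < e" "0 < F"
    and "e / (3 * F) \<le> \<eta>"
  shows "\<gamma> * d powr b * \<eta> powr (- a) \<le> 3 powr a * \<gamma> * d' powr b * F powr a * e powr (- a)"
proof -
  have "\<eta> powr (- a) \<le> (e / (3 * F)) powr (- a)"
    using assms by (intro powr_mono2') auto
  also have "\<dots> = 3 powr a * F powr a * e powr (- a)"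
    using assms by (simp add: powr_minus_divide powr_divide powr_mult divide_simps)
  finally have "d powr b * \<eta> powr (- a) \<le> d' powr b * (3 powr a * F powr a * e powr (- a))"
    using assms by (intro mult_mono powr_mono2) auto
  then have "\<gamma> * (d powr b * \<eta> powr (- a)) \<le> \<gamma> * (d' powr b * (3 powr a * F powr a * e powr (- a)))"
    using assms(1) by (rule mult_left_mono)
  then show ?thesis by (simp add: mult_ac)
qed

theorem mainTheorem4:
  fixes n r :: nat and g :: "nat \<Rightarrow> mpoly" and c L \<gamma> :: real and f :: mpoly
  assumes n2: "n \<ge> 2"
    and g_in: "\<forall>i<r. poly_in n (g i)"
    and S_ne: "semialg n r g \<noteq> {}"
    and archim: "mconst 1 - (\<Sum>i<n. mvar i * mvar i) \<in> qmod n r g"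
    and g_small: "\<forall>i<r. mnorm n (g i) \<le> 1/2"
    and c1: "c \<ge> 1" and L1: "L \<ge> 1"
    and loj: "\<forall>x\<in>cube n. Dfun n r g x powr L \<le> c * Gfun r g x"
    and gamma1: "\<gamma> \<ge> 1"
    and putinar: "\<forall>h l. poly_in n h \<and> minS n r g h > 0 \<and>
         real l \<ge> \<gamma> * real (mdeg h) powr (3.5 * n * L) * eps_rel n r g h powr (- 2.5 * n * L)
         \<longrightarrow> h \<in> qmod_trunc n r g l"
    and f_in: "poly_in n f"
    and f_nonneg: "\<forall>x\<in>semialg n r g. meval f x \<ge> 0"
  shows "\<forall>\<epsilon> l. 0 < \<epsilon> \<and> \<epsilon> \<le> mnorm n f \<and>
         real l \<ge> (3 powr (2.5 * n * L) * \<gamma>) * real (mdeg f) powr (3.5 * n * L)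
                    * mnorm n f powr (2.5 * n * L) * \<epsilon> powr (- 2.5 * n * L)
         \<longrightarrow> f - mconst (minS n r g f) + mconst \<epsilon> \<in> qmod_trunc n r g l"
proof (intro allI impI)
  fix \<epsilon> :: real and l :: nat
  assume hyp: "0 < \<epsilon> \<and> \<epsilon> \<le> mnorm n f \<and>
         real l \<ge> (3 powr (2.5 * n * L) * \<gamma>) * real (mdeg f) powr (3.5 * n * L)
                    * mnorm n f powr (2.5 * n * L) * \<epsilon> powr (- 2.5 * n * L)"
  then have \<epsilon>: "0 < \<epsilon>" "\<epsilon> \<le> mnorm n f" by auto
  let ?fmin = "minS n r g f"
  define h where "h = f + mconst (\<epsilon> - ?fmin)"
  have S: "semialg n r g \<subseteq> cube n" using archim by (rule semialg_subset_cube)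
  have fmin: "0 \<le> ?fmin" "?fmin \<le> mnorm n f"
    using minS_nonneg[OF S_ne f_nonneg] minS_le_mnorm[OF S S_ne] by auto
  have min_h: "minS n r g h = \<epsilon>"
    using minS_add_mconst[OF S S_ne] by (simp add: h_def)
  have "mnorm n h \<le> 3 * mnorm n f"
    using mnorm_add_mconst_le[of n f "\<epsilon> - ?fmin"] \<epsilon> fmin by (simp add: h_def)
  then have eps_h: "\<epsilon> / (3 * mnorm n f) \<le> eps_rel n r g h"
    using eps_rel_ge[OF S S_ne] \<epsilon>(1) min_h by simp
  have deg_h: "mdeg h \<le> mdeg f" by (simp add: h_def mdeg_add_mconst_le)
  let ?a = "2.5 * n * L" and ?b = "3.5 * n * L"
  have "\<gamma> * real (mdeg h) powr ?b * eps_rel n r g h powr (- ?a)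
      \<le> 3 powr ?a * \<gamma> * real (mdeg f) powr ?b * mnorm n f powr ?a * \<epsilon> powr (- ?a)"
    by (rule degree_threshold_le) (use gamma1 L1 \<epsilon> deg_h eps_h in auto)
  also have "\<dots> \<le> real l" using hyp by simp
  finally have "real l \<ge> \<gamma> * real (mdeg h) powr (3.5 * n * L) * eps_rel n r g h powr (- 2.5 * n * L)"
    by simp
  then have "h \<in> qmod_trunc n r g l"
    using putinar poly_in_add_mconst[OF f_in] min_h \<epsilon>(1) by (auto simp: h_def)
  moreover have "h = f - mconst ?fmin + mconst \<epsilon>"
    by (simp add: h_def mconst_def single_diff single_add)
  ultimately show "f - mconst ?fmin + mconst \<epsilon> \<in> qmod_trunc n r g l" by simp
qed

end
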